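(* Let $n>1$, let $L_1,\dots,L_n$ be complete lattices, let $f:L_1\times\dots\times L_n\to L_1\times\dots\times L_n$ be monotone, let $B$ be a binding map on $\{1,\dots,n\}$, let $i,j\in\{1,\dots,n\}$ and $a_j\in L_j$. If $i<j$, then \[ nested(n,i,B(j\coloneq a_j),f)=nested(n-1,i,Sp_jB,Sp_{j,a_j}f). \] If $i>j$, then \[ nested(n,i,B(j\coloneq a_j),f)=nested(n-1,i-1,Sp_jB,Sp_{j,a_j}f). \]
   Context: For any $m\ge1$, complete lattices $M_1,\dots,M_m$ and monotone $g:M_1\times\dots\times M_m\to M_1\times\dots\times M_m$ with projections $g_1,\dots,g_m$: a binding map is a map $B:\{1,\dots,m\}\to\big(\bigsqcup_k M_k\big)\sqcup\{undef\}$ with $B(k)\in M_k$ whenever $B(k)\neq undef$ ($undef$ is a special symbol meaning "unbound"); $B(j\coloneq v)$ is the map sending $j$ to $v$ and $k\neq j$ to $B(k)$. The nested fixpoint is defined recursively by \[ nested(m,i,B,g)=\mu x_i.\, g_i(v(x_i)), \] where $v(x_i)\in M_1\times\dots\times M_m$ has $k$-th coordinate: $x_i$ if $k=i$; otherwise $B(k)$ if $B(k)\neq undef$; otherwise $nested(m,k,B(i\coloneq x_i),g)$. Here $\mu x_i.\,h(x_i)$ is the least fixed point of the monotone map $h$ on $M_i$ (the recursion terminates since each recursive call binds a previously unbound coordinate). Specialization: for $f$ on $L_1\times\dots\times L_n$, $j\in\{1,\dots,n\}$ and $a_j\in L_j$, identify $L_1\times\dots\times\widehat{L_j}\times\dots\times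 L_n$ with a product of $n-1$ lattices indexed by $1,\dots,n-1$ (coordinate $h<j$ is $L_h$, coordinate $h\ge j$ is $L_{h+1}$). For $\vec y=(y_1,\dots,y_{n-1})$ let $E_{j,a_j}\vec y=(y_1,\dots,y_{j-1},a_j,y_j,\dots,y_{n-1})\in L_1\times\dots\times L_n$. Then $Sp_{j,a_j}f$ is the monotone self-map of this $(n-1)$-fold product with coordinates $(Sp_{j,a_j}f)_h(\vec y)=f_h(E_{j,a_j}\vec y)$ for $1\le h<j$ and $(Sp_{j,a_j}f)_h(\vec y)=f_{h+1}(E_{j,a_j}\vec y)$ for $j\le h\le n-1$. Correspondingly, $Sp_jB$ is the binding map on $\{1,\dots,n-1\}$ with $(Sp_jB)(h)=B(h)$ for $h<j$ and $(Sp_jB)(h)=B(h+1)$ for $j\le h\le n-1$. *)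

theory Defs
  imports "HOL-Algebra.Complete_Lattice" "HOL-Library.FuncSet"
begin

text \<open>A family of complete lattices M_1,...,M_m is modelled by
  L :: nat => 'a gorder, where the k-th lattice is L k (only k in {1..m} matters);
  all lattices live in one ambient type 'a (any family embeds into a disjoint union).
  Elements of M_1 x ... x M_m are extensional functions nat => 'a on {1..m}
  (the set prod_carrier L m).  A binding map is B :: nat => 'a option,
  None meaning undef.  mu is the least fixed point LFP of HOL-Algebra.\<close>

definition prod_carrier :: "(nat \<Rightarrow> 'a gorder) \<Rightarrow> nat \<Rightarrow> (nat \<Rightarrow> 'a) set" where
  "prod_carrier L m = (\<Pi>\<^sub>E k\<in>{1..m}. carrier (L k))"

definition prod_le :: "(nat \<Rightarrow> 'a gorder) \<Rightarrow> nat \<Rightarrow> (nat \<Rightarrow> 'a) \<Rightarrow> (nat \<Rightarrow> 'a) \<Rightarrow> bool" where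
  "prod_le L m x y = (\<forall>k\<in>{1..m}. le (L k) (x k) (y k))"

definition prod_mono :: "(nat \<Rightarrow> 'a gorder) \<Rightarrow> nat \<Rightarrow> ((nat \<Rightarrow> 'a) \<Rightarrow> (nat \<Rightarrow> 'a)) \<Rightarrow> bool" where
  "prod_mono L m g = (\<forall>x\<in>prod_carrier L m. \<forall>y\<in>prod_carrier L m.
      prod_le L m x y \<longrightarrow> prod_le L m (g x) (g y))"

definition binding_map :: "(nat \<Rightarrow> 'a gorder) \<Rightarrow> nat \<Rightarrow> (nat \<Rightarrow> 'a option) \<Rightarrow> bool" where
  "binding_map L m B = (\<forall>k\<in>{1..m}. \<forall>b. B k = Some b \<longrightarrow> b \<in> carrier (L k))"

definition bvec :: "nat \<Rightarrow> nat \<Rightarrow> 'a \<Rightarrow> (nat \<Rightarrow> 'a option) \<Rightarrow> (nat \<Rightarrow> 'a) \<Rightarrow> (nat \<Rightarrow> 'a)" where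
  "bvec m i x B r = (\<lambda>k. if k \<in> {1..m} then
      (if k = i then x else (case B k of Some b \<Rightarrow> b | None \<Rightarrow> r k)) else undefined)"

text \<open>The recursion of nested is well-founded: the number of unbound coordinates
  other than the current one strictly decreases with each recursive call and is
  at most m.  We implement it with a fuel parameter; fuel m is always sufficient
  (at fuel 0 no unbound coordinate other than i remains in any call reached).\<close>
primrec nested_fuel :: "(nat \<Rightarrow> 'a gorder) \<Rightarrow> nat \<Rightarrow> nat \<Rightarrow> nat \<Rightarrow> (nat \<Rightarrow> 'a option)
    \<Rightarrow> ((nat \<Rightarrow> 'a) \<Rightarrow> (nat \<Rightarrow> 'a)) \<Rightarrow> 'a" where
  "nested_fuel L m 0 i B g =
     LFP\<^bsub>L i\<^esub> (\<lambda>x. g (bvec m i x B (\<lambda>k. undefined)) i)"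
| "nested_fuel L m (Suc d) i B g =
     LFP\<^bsub>L i\<^esub> (\<lambda>x. g (bvec m i x B (\<lambda>k. nested_fuel L m d k (B(i := Some x)) g)) i)"

definition nested :: "(nat \<Rightarrow> 'a gorder) \<Rightarrow> nat \<Rightarrow> nat \<Rightarrow> (nat \<Rightarrow> 'a option)
    \<Rightarrow> ((nat \<Rightarrow> 'a) \<Rightarrow> (nat \<Rightarrow> 'a)) \<Rightarrow> 'a" where
  "nested L m i B g = nested_fuel L m m i B g"

definition Sp_lat :: "nat \<Rightarrow> (nat \<Rightarrow> 'a gorder) \<Rightarrow> (nat \<Rightarrow> 'a gorder)" where
  "Sp_lat j L = (\<lambda>h. if h < j then L h else L (h + 1))"

definition Ext :: "nat \<Rightarrow> nat \<Rightarrow> 'a \<Rightarrow> (nat \<Rightarrow> 'a) \<Rightarrow> (nat \<Rightarrow> 'a)" where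
  "Ext n j a y = (\<lambda>k. if k \<in> {1..n} then
      (if k < j then y k else if k = j then a else y (k - 1)) else undefined)"

definition Sp_fun :: "nat \<Rightarrow> nat \<Rightarrow> 'a \<Rightarrow> ((nat \<Rightarrow> 'a) \<Rightarrow> (nat \<Rightarrow> 'a)) \<Rightarrow> ((nat \<Rightarrow> 'a) \<Rightarrow> (nat \<Rightarrow> 'a))" where
  "Sp_fun n j a f = (\<lambda>y h. if h \<in> {1..n-1} then
      (if h < j then f (Ext n j a y) h else f (Ext n j a y) (h + 1)) else undefined)"

definition Sp_bind :: "nat \<Rightarrow> (nat \<Rightarrow> 'a option) \<Rightarrow> (nat \<Rightarrow> 'a option)" where
  "Sp_bind j B = (\<lambda>h. if h < j then B h else B (h + 1))"

end

theory Submission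
  imports Defs
begin

text \<open>Once coordinate j is bound to a, the two recursions run in lockstep: each level of
  nested on L_1 x ... x L_n takes the least fixpoint of the same function on the same
  lattice as the corresponding level on the specialised product, where coordinate k is
  renumbered del_index j k.  Induction on the number of unbound coordinates makes this
  precise; the original recursion needs one unit of fuel more, for the coordinate j it
  never unfolds.  The argument is purely syntactic.\<close>

definition del_index :: "nat \<Rightarrow> nat \<Rightarrow> nat" where
  "del_index j k = (if k < j then k else k - 1)"

lemma del_index_in_range:
  assumes "k \<in> {1..n}" "j \<in> {1..n}" "k \<noteq> j"
  shows "del_index j k \<in> {1..n - 1}"
  using assms by (auto simp: del_index_def)

lemma Sp_lat_del_index: "k \<noteq> j \<Longrightarrow> Sp_lat j L (del_index j k) = L k"
  by (auto simp: Sp_lat_def del_index_def)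

lemma Sp_fun_del_index:
  assumes "k \<in> {1..n}" "j \<in> {1..n}" "k \<noteq> j"
  shows "Sp_fun n j a f y (del_index j k) = f (Ext n j a y) k"
  using assms by (auto simp: Sp_fun_def del_index_def)

lemma Sp_bind_del_index: "k \<noteq> j \<Longrightarrow> Sp_bind j B (del_index j k) = B k"
  by (auto simp: Sp_bind_def del_index_def)

lemma Sp_bind_fun_upd: "k \<noteq> j \<Longrightarrow> Sp_bind j (B(k := v)) = (Sp_bind j B)(del_index j k := v)"
  by (auto simp: Sp_bind_def del_index_def fun_eq_iff)

lemma Sp_bind_fun_upd_self: "Sp_bind j (B(j := v)) = Sp_bind j B"
  by (auto simp: Sp_bind_def fun_eq_iff)

lemma Ext_bvec_Sp_bind:
  assumes "i \<in> {1..n}" "j \<in> {1..n}" "i \<noteq> j" "B j = Some a"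
    and "\<And>k. k \<in> {1..n} \<Longrightarrow> k \<noteq> i \<Longrightarrow> B k = None \<Longrightarrow> r k = r' (del_index j k)"
  shows "Ext n j a (bvec (n - 1) (del_index j i) x (Sp_bind j B) r') = bvec n i x B r"
proof
  fix k
  show "Ext n j a (bvec (n - 1) (del_index j i) x (Sp_bind j B) r') k = bvec n i x B r k"
  proof (cases "k \<in> {1..n} \<and> k \<noteq> j")
    case True
    then have "Ext n j a y k = y (del_index j k)" for y
      by (auto simp: Ext_def del_index_def)
    moreover have "(del_index j k = del_index j i) = (k = i)"
      using True assms(1,3) by (auto simp: del_index_def)
    ultimately show ?thesis
      using True assms(2,5) del_index_in_range[of k n j] Sp_bind_del_index[of k j B]
      by (cases "B k") (auto simp: bvec_def)
  qed (use assms(3,4) in \<open>auto simp: Ext_def bvec_def\<close>)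
qed

lemma LFP_bvec_Sp_fun:
  assumes "i \<in> {1..n}" "j \<in> {1..n}" "i \<noteq> j" "B j = Some a"
    and "\<And>x k. k \<in> {1..n} \<Longrightarrow> k \<noteq> i \<Longrightarrow> B k = None \<Longrightarrow> r x k = r' x (del_index j k)"
  shows "LFP\<^bsub>L i\<^esub> (\<lambda>x. f (bvec n i x B (r x)) i)
       = LFP\<^bsub>Sp_lat j L (del_index j i)\<^esub>
           (\<lambda>x. Sp_fun n j a f (bvec (n - 1) (del_index j i) x (Sp_bind j B) (r' x)) (del_index j i))"
proof -
  have "f (bvec n i x B (r x)) i
      = Sp_fun n j a f (bvec (n - 1) (del_index j i) x (Sp_bind j B) (r' x)) (del_index j i)" for x
  proof -
    have "Ext n j a (bvec (n - 1) (del_index j i) x (Sp_bind j B) (r' x)) = bvec n i x B (r x)"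
      by (rule Ext_bvec_Sp_bind) (use assms in auto)
    then show ?thesis
      unfolding Sp_fun_del_index[OF assms(1-3)] by simp
  qed
  then show ?thesis
    unfolding Sp_lat_del_index[OF assms(3)] by simp
qed

lemma nested_fuel_Sp:
  assumes "j \<in> {1..n}" "i \<in> {1..n}" "i \<noteq> j" "B j = Some a"
    and "card {k \<in> {1..n}. B k = None \<and> k \<noteq> i} \<le> d"
  shows "nested_fuel L n (Suc d) i B f
       = nested_fuel (Sp_lat j L) (n - 1) d (del_index j i) (Sp_bind j B) (Sp_fun n j a f)"
  using assms(2-5)
proof (induction d arbitrary: i B)
  case 0
  then have no_unbound: "\<not> (k \<in> {1..n} \<and> k \<noteq> i \<and> B k = None)" for k
    by auto
  show ?case
    unfolding nested_fuel.simps
    by (rule LFP_bvec_Sp_fun) (use 0 assms(1) no_unbound in auto)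
next
  case (Suc d)
  have recursive_calls_agree: "nested_fuel L n (Suc d) k (B(i := Some x)) f
      = nested_fuel (Sp_lat j L) (n - 1) d (del_index j k)
          ((Sp_bind j B)(del_index j i := Some x)) (Sp_fun n j a f)"
    if k: "k \<in> {1..n}" "k \<noteq> i" "B k = None" for x k
  proof -
    have "{k' \<in> {1..n}. (B(i := Some x)) k' = None \<and> k' \<noteq> k}
        = {k' \<in> {1..n}. B k' = None \<and> k' \<noteq> i} - {k}"
      using k by auto
    then have "card {k' \<in> {1..n}. (B(i := Some x)) k' = None \<and> k' \<noteq> k} \<le> d"
      using Suc.prems(4) k by simp
    moreover have "k \<noteq> j"
      using k Suc.prems(3) by auto
    moreover have "(B(i := Some x)) j = Some a"
      using Suc.prems(2,3) by simp
    ultimately show ?thesis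
      using Suc.IH[of k "B(i := Some x)"] k(1)
      unfolding Sp_bind_fun_upd[OF Suc.prems(2)] by blast
  qed
  show ?case
    unfolding nested_fuel.simps(2)[of L n "Suc d" i B f]
      nested_fuel.simps(2)[of "Sp_lat j L" "n - 1" d]
    by (rule LFP_bvec_Sp_fun)
      (use Suc.prems assms(1) recursive_calls_agree in \<open>auto simp del: nested_fuel.simps simp: fun_upd_def\<close>)
qed

theorem mainTheorem2:
  fixes L :: "nat \<Rightarrow> 'a gorder" and n i j :: nat and a :: 'a
    and f :: "(nat \<Rightarrow> 'a) \<Rightarrow> (nat \<Rightarrow> 'a)" and B :: "nat \<Rightarrow> 'a option"
  assumes "n > 1"
    and "\<forall>k\<in>{1..n}. complete_lattice (L k)"
    and "f \<in> prod_carrier L n \<rightarrow> prod_carrier L n"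
    and "prod_mono L n f"
    and "binding_map L n B"
    and "i \<in> {1..n}" and "j \<in> {1..n}"
    and "a \<in> carrier (L j)"
  shows "(i < j \<longrightarrow> nested L n i (B(j := Some a)) f
            = nested (Sp_lat j L) (n - 1) i (Sp_bind j B) (Sp_fun n j a f))
       \<and> (i > j \<longrightarrow> nested L n i (B(j := Some a)) f
            = nested (Sp_lat j L) (n - 1) (i - 1) (Sp_bind j B) (Sp_fun n j a f))"
proof -
  have "card {k \<in> {1..n}. (B(j := Some a)) k = None \<and> k \<noteq> i} \<le> card ({1..n} - {j})"
    by (intro card_mono) auto
  then have unbound: "card {k \<in> {1..n}. (B(j := Some a)) k = None \<and> k \<noteq> i} \<le> n - 1"
    using assms(7) by simp
  have "nested L n i (B(j := Some a)) f
      = nested (Sp_lat j L) (n - 1) (del_index j i) (Sp_bind j B) (Sp_fun n j a f)"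
    if "i \<noteq> j"
    using nested_fuel_Sp[OF assms(7,6) that _ unbound, where L = L and f = f] assms(1)
    by (simp only: nested_def Sp_bind_fun_upd_self fun_upd_same Suc_diff_1)
  then show ?thesis
    by (auto simp: del_index_def)
qed

end
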